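(* Let $m,k$ be natural numbers. If the leading term in the hereditary representation in base $k+1$ of the $k$-th term $G(k,m)$ of the Goodstein sequence $G(m)$ is of the form $1\cdot(k+1)^{l}$ with $k+1>l$, then $G(k+1,m)>G(k,m)$ if $l>1$, $G(k+1,m)=G(k,m)$ if $l=1$, and $G(k+1,m)<G(k,m)$ if $l=0$.
   Context: For a natural number base $b>1$, the hereditary representation $m\langle b\rangle$ of $m$ is $\sum_{i=0}^{l} a_i b^{i}$ with $0\le a_i<b$, $a_l\ne0$, each exponent itself written in hereditary representation in base $b$, recursively; its leading term is $a_l b^{l}$. $m\langle b\rangle''$ is obtained by syntactically replacing every $b$ by $b+1$ in $m\langle b\rangle$. The Goodstein sequence $G(m)=\{m, m''-1, (m''-1)''-1,\dots\}$ starts from $m$ in base $2$; its $n$-th term is $G(n,m)$, with $G(1,m)=m$ in base $2$, $G(k,m)$ written in base $k+1$, and $G(k+1,m)=G(k,m)\langle k+1\rangle''-1$. *)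

theory Defs
  imports Main
begin

(* Hereditary base bump: write n in hereditary base b and replace every b by b+1.
   n = sum_i a_i b^i with digits a_i = n div b^i mod b (only i < n can carry a
   nonzero digit when b >= 2), exponents i themselves written hereditarily. *)
function bump :: "nat \<Rightarrow> nat \<Rightarrow> nat" where
  "bump b n = (\<Sum>i<n. (n div b ^ i mod b) * (b + 1) ^ (bump b i))"
  by pat_completeness auto
termination
proof (relation "measure snd")
  show "wf (measure snd)" by simp
next
  fix b n i :: nat
  assume "i \<in> {..<n}"
  then show "((b, i), (b, n)) \<in> measure snd" by simp
qed

declare bump.simps [simp del]

(* exponent l of the leading term a_l b^l of n (for n > 0, b > 1) *)
definition lead_exp :: "nat \<Rightarrow> nat \<Rightarrow> nat" where
  "lead_exp b n = (GREATEST i. b ^ i \<le> n)"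

definition lead_digit :: "nat \<Rightarrow> nat \<Rightarrow> nat" where
  "lead_digit b n = n div b ^ lead_exp b n"

(* Goodstein sequence: goodstein k m = G(k,m), k >= 1; G(1,m) = m (base 2),
   G(k+1,m) = G(k,m)<k+1>'' - 1.  The index 0 value is an irrelevant dummy. *)
fun goodstein :: "nat \<Rightarrow> nat \<Rightarrow> nat" where
  "goodstein 0 m = m"
| "goodstein (Suc 0) m = m"
| "goodstein (Suc (Suc k)) m = bump (Suc (Suc k)) (goodstein (Suc k) m) - 1"

end

theory Submission
  imports Defs
begin

(* Write b = k + 1 and G(k,m) = b^l + r with r < b^l.  The base bump acts termwise on the
   hereditary representation: the exponent l < b is a single digit and is left unchanged, so the
   leading term becomes (b+1)^l, while the remainder r is bumped to some r' >= r.  Hence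
   G(k+1,m) = (b+1)^l + r' - 1.  For l >= 2 this exceeds b^l + r because (b+1)^l > b^l + 1;
   for l = 1 the remainder r < b is a digit, so G(k+1,m) = b + 1 + r - 1 = G(k,m); for l = 0
   the number is 1 and drops to 0. *)

lemma nat_eq_sum_digits:
  fixes b n :: nat
  assumes "n < b ^ N"
  shows "n = (\<Sum>i<N. (n div b ^ i mod b) * b ^ i)"
  using assms
proof (induction N arbitrary: n)
  case 0
  then show ?case by simp
next
  case (Suc N)
  have "n div b < b ^ N"
    using Suc.prems by (metis less_mult_imp_div_less power_Suc2)
  then have IH: "n div b = (\<Sum>i<N. (n div b div b ^ i mod b) * b ^ i)"
    using Suc.IH by blast
  have "(\<Sum>i<Suc N. (n div b ^ i mod b) * b ^ i)
      = n mod b + (\<Sum>i<N. (n div b ^ Suc i mod b) * b ^ Suc i)"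
    by (subst sum.lessThan_Suc_shift) simp
  also have "\<dots> = n mod b + b * (\<Sum>i<N. (n div b div b ^ i mod b) * b ^ i)"
    by (simp add: sum_distrib_left div_mult2_eq mult.assoc mult.left_commute)
  also have "\<dots> = n"
    using IH by simp
  finally show ?case by simp
qed

lemma bump_0 [simp]: "bump b 0 = 0"
  by (simp add: bump.simps[of b 0])

lemma bump_eq_sum_lessThan:
  assumes "2 \<le> b" "n \<le> N"
  shows "bump b n = (\<Sum>i<N. (n div b ^ i mod b) * (b + 1) ^ bump b i)"
proof -
  have "n < b ^ i" if "n \<le> i" for i
    using power_gt_expt[of b i] assms(1) that by simp
  then have "(\<Sum>i<N. (n div b ^ i mod b) * (b + 1) ^ bump b i)
      = (\<Sum>i<n. (n div b ^ i mod b) * (b + 1) ^ bump b i)"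
    using assms(2) by (intro sum.mono_neutral_right) auto
  then show ?thesis
    by (simp add: bump.simps[of b n])
qed

lemma le_bump:
  assumes "2 \<le> b"
  shows "n \<le> bump b n"
proof (induction n rule: less_induct)
  case (less n)
  have "n = (\<Sum>i<n. (n div b ^ i mod b) * b ^ i)"
    using assms by (intro nat_eq_sum_digits power_gt_expt) simp
  also have "\<dots> \<le> (\<Sum>i<n. (n div b ^ i mod b) * (b + 1) ^ bump b i)"
  proof (intro sum_mono mult_left_mono)
    fix i
    assume "i \<in> {..<n}"
    then have "b ^ i \<le> b ^ bump b i"
      using less.IH assms by (simp add: power_increasing)
    also have "\<dots> \<le> (b + 1) ^ bump b i"
      by (simp add: power_mono)
    finally show "b ^ i \<le> (b + 1) ^ bump b i" .
  qed simp
  also have "\<dots> = bump b n"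
    by (simp add: bump.simps[of b n])
  finally show ?case .
qed

lemma digit_leading_term:
  fixes b :: nat
  assumes "a < b" "r < b ^ l"
  shows "(a * b ^ l + r) div b ^ i mod b = r div b ^ i mod b + (if i = l then a else 0)"
proof (cases "i \<le> l")
  case True
  have "a * b ^ l + r = r + a * b ^ (l - i) * b ^ i"
    using True by (simp flip: power_add)
  moreover have "b ^ i \<noteq> 0"
    using assms(1) by simp
  ultimately have quotient: "(a * b ^ l + r) div b ^ i = a * b ^ (l - i) + r div b ^ i"
    by (metis div_mult_self1)
  show ?thesis
  proof (cases "i = l")
    case True
    then show ?thesis
      using quotient assms by simp
  next
    case False
    then have "l - i = Suc (l - Suc i)"
      using \<open>i \<le> l\<close> by simp
    then have multiple: "a * b ^ (l - i) = b * (a * b ^ (l - Suc i))"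
      by simp
    have "(a * b ^ l + r) div b ^ i mod b = r div b ^ i mod b"
      unfolding quotient multiple by (rule mod_mult_self4)
    with False show ?thesis
      by (simp only: if_False add_0_right)
  qed
next
  case False
  have "a * b ^ l + r < Suc a * b ^ l"
    using assms(2) by simp
  also have "\<dots> \<le> b * b ^ l"
    using assms(1) by (intro mult_right_mono) simp_all
  also have "\<dots> \<le> b ^ i"
    using False assms(1) by (simp flip: power_Suc add: power_increasing)
  finally have "a * b ^ l + r < b ^ i" .
  moreover have "r < b ^ i"
    using \<open>a * b ^ l + r < b ^ i\<close> by linarith
  ultimately show ?thesis
    using False by simp
qed

lemma bump_leading_term:
  assumes "2 \<le> b" "a < b" "r < b ^ l"
  shows "bump b (a * b ^ l + r) = a * (b + 1) ^ bump b l + bump b r"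
proof -
  let ?n = "a * b ^ l + r"
  have "bump b ?n = (\<Sum>i<?n + Suc l. (?n div b ^ i mod b) * (b + 1) ^ bump b i)"
    using assms(1) by (rule bump_eq_sum_lessThan) simp
  also have "\<dots> = (\<Sum>i<?n + Suc l. (r div b ^ i mod b) * (b + 1) ^ bump b i
                      + (if i = l then a * (b + 1) ^ bump b i else 0))"
    using assms(2,3) by (intro sum.cong) (simp_all add: digit_leading_term distrib_right)
  also have "\<dots> = (\<Sum>i<?n + Suc l. (r div b ^ i mod b) * (b + 1) ^ bump b i)
                  + a * (b + 1) ^ bump b l"
    by (auto simp: sum.distrib)
  also have "(\<Sum>i<?n + Suc l. (r div b ^ i mod b) * (b + 1) ^ bump b i) = bump b r"
    by (rule bump_eq_sum_lessThan[symmetric, OF assms(1)]) linarith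
  finally show ?thesis by simp
qed

lemma bump_digit:
  assumes "2 \<le> b" "a < b"
  shows "bump b a = a"
  using bump_leading_term[OF assms, of 0 0] by simp

lemma Suc_power_less_power_Suc:
  fixes b :: nat
  assumes "2 \<le> l" "0 < b"
  shows "Suc (b ^ l) < Suc b ^ l"
  using assms(1)
proof (induction l rule: dec_induct)
  case base
  show ?case
    using assms(2) by (simp add: power2_eq_square)
next
  case (step l)
  have "Suc (b ^ Suc l) < b * Suc (Suc (b ^ l))"
    using assms(2) by simp
  also have "\<dots> \<le> Suc b * Suc b ^ l"
    using step.IH by (intro mult_mono) simp_all
  finally show ?case by simp
qed

lemma bump_unit_leading_digit:
  assumes "2 \<le> b" "l < b" "n div b ^ l = 1"
  shows "bump b n = (b + 1) ^ l + bump b (n mod b ^ l)"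
proof -
  have "1 * b ^ l + n mod b ^ l = n"
    using assms(3) by (metis div_mult_mod_eq)
  moreover have "bump b (1 * b ^ l + n mod b ^ l) = 1 * (b + 1) ^ bump b l + bump b (n mod b ^ l)"
    using assms(1) by (intro bump_leading_term) simp_all
  ultimately show ?thesis
    using bump_digit[OF assms(1,2)] by simp
qed

lemma goodstein_Suc: "0 < k \<Longrightarrow> goodstein (Suc k) m = bump (Suc k) (goodstein k m) - 1"
  by (cases k) auto

theorem lemma5:
  fixes m k l :: nat
  assumes "k \<ge> 1"
    and "goodstein k m > 0"
    and "lead_digit (k + 1) (goodstein k m) = 1"
    and "lead_exp (k + 1) (goodstein k m) = l"
    and "k + 1 > l"
  shows "(l > 1 \<longrightarrow> goodstein (k + 1) m > goodstein k m)
       \<and> (l = 1 \<longrightarrow> goodstein (k + 1) m = goodstein k m)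
       \<and> (l = 0 \<longrightarrow> goodstein (k + 1) m < goodstein k m)"
proof -
  define b where "b = k + 1"
  define n where "n = goodstein k m"
  define r where "r = n mod b ^ l"
  have "2 \<le> b"
    using assms(1) by (simp add: b_def)
  have lead: "n div b ^ l = 1"
    using assms(3,4) by (simp add: lead_digit_def n_def b_def)
  then have n: "n = b ^ l + r"
    unfolding r_def by (metis div_mult_mod_eq mult_1)
  have "r < b ^ l"
    using \<open>2 \<le> b\<close> by (simp add: r_def)
  have step: "goodstein (k + 1) m = (b + 1) ^ l + bump b r - 1"
    using goodstein_Suc[of k m] bump_unit_leading_digit[OF \<open>2 \<le> b\<close> _ lead] assms(1,5)
    by (simp add: b_def n_def r_def)
  show ?thesis
  proof (intro conjI impI)
    assume "1 < l"
    then have "b ^ l + 1 < (b + 1) ^ l"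
      using Suc_power_less_power_Suc[of l b] \<open>2 \<le> b\<close> by simp
    then show "goodstein k m < goodstein (k + 1) m"
      using step n le_bump[OF \<open>2 \<le> b\<close>, of r] unfolding n_def by linarith
  next
    assume "l = 1"
    then have "bump b r = r"
      using bump_digit[OF \<open>2 \<le> b\<close>] \<open>r < b ^ l\<close> by simp
    then show "goodstein (k + 1) m = goodstein k m"
      using step n \<open>l = 1\<close> unfolding n_def by simp
  next
    assume "l = 0"
    then show "goodstein (k + 1) m < goodstein k m"
      using step n \<open>r < b ^ l\<close> unfolding n_def by simp
  qed
qed

end
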